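(* Let $R$ be a simple path in $T$ with consecutive vertices $r_1,\dots,r_m$, let $k$ be an integer with $2\le k\le m$, put $N=m-k+1$, and for $j=1,\dots,N$ let $P_j$ be the path $r_j,\dots,r_{j+k-1}$. Assume $|P_j|=l$ for all $j$. Then $\min_{1\le j\le N}\overline{S}(P_j)=\min\{\overline{S}(P_1),\overline{S}(P_N)\}$, i.e. the minimum of the mean service time over these shifted paths is attained at one of the two extreme positions.
   Context: Let $T=(V,E)$ be a finite tree with vertex set $V=\{v_1,\dots,v_n\}$ and positive edge lengths; $d(x,y)$ denotes the length of the unique path in $T$ between vertices $x,y$. Each vertex $v_i$ has a weight $w_i\ge 0$ with $w(T)=\sum_i w_i=1$. A path $P$ is the vertex sequence $p(1),\dots,p(k)$ of a simple path in $T$; $|P|=d(p(1),p(k))$. For $v\in V$, $p_P(v)$ denotes the unique vertex of $P$ closest to $v$. For a vertex $p$ of $P$, the branch $T_p$ (with respect to $P$) is the set of vertices $v$ with $p_P(v)=p$, and $w_{T_p}=\sum_{v_i\in T_p}w_i$. For a vertex $p$ of $P$ put $\overline{d}_P(p)=\sum_{j=1}^k w_{T_{p(j)}}\,d(p(j),p)$. Fix a speed $v_t>0$ and a constant $\overline{G}\ge0$. Define $\overline{T}_2(P)=\frac{1}{v_t}\sum_i w_i\,\overline{d}_P(p_P(v_i))$ and $\overline{S}(P)=\overline{T}_2(P)+\overline{G}$. *)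

theory Defs
  imports Complex_Main
begin

definition is_walk :: "'a set set \<Rightarrow> 'a list \<Rightarrow> bool" where
  "is_walk E xs \<longleftrightarrow> xs \<noteq> [] \<and> (\<forall>i < length xs - 1. {xs ! i, xs ! Suc i} \<in> E)"

definition is_path :: "'a set set \<Rightarrow> 'a list \<Rightarrow> bool" where
  "is_path E xs \<longleftrightarrow> is_walk E xs \<and> distinct xs"

definition is_tree :: "'a set \<Rightarrow> 'a set set \<Rightarrow> bool" where
  "is_tree V E \<longleftrightarrow> finite V \<and> V \<noteq> {} \<and>
     (\<forall>e\<in>E. \<exists>x y. e = {x, y} \<and> x \<noteq> y \<and> x \<in> V \<and> y \<in> V) \<and>
     (\<forall>x\<in>V. \<forall>y\<in>V. \<exists>!xs. is_path E xs \<and> hd xs = x \<and> last xs = y)"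

definition path_len :: "('a set \<Rightarrow> real) \<Rightarrow> 'a list \<Rightarrow> real" where
  "path_len len xs = (\<Sum>i < length xs - 1. len {xs ! i, xs ! Suc i})"

definition tdist :: "'a set set \<Rightarrow> ('a set \<Rightarrow> real) \<Rightarrow> 'a \<Rightarrow> 'a \<Rightarrow> real" where
  "tdist E len x y = path_len len (THE xs. is_path E xs \<and> hd xs = x \<and> last xs = y)"

definition plen :: "'a set set \<Rightarrow> ('a set \<Rightarrow> real) \<Rightarrow> 'a list \<Rightarrow> real" where
  "plen E len P = tdist E len (hd P) (last P)"

definition proj :: "'a set set \<Rightarrow> ('a set \<Rightarrow> real) \<Rightarrow> 'a list \<Rightarrow> 'a \<Rightarrow> 'a" where
  "proj E len P v = (THE p. p \<in> set P \<and> (\<forall>q \<in> set P. q \<noteq> p \<longrightarrow> tdist E len v p < tdist E len v q))"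

definition branch_weight :: "'a set \<Rightarrow> 'a set set \<Rightarrow> ('a set \<Rightarrow> real) \<Rightarrow> ('a \<Rightarrow> real) \<Rightarrow> 'a list \<Rightarrow> 'a \<Rightarrow> real" where
  "branch_weight V E len w P p = (\<Sum>v \<in> {v \<in> V. proj E len P v = p}. w v)"

definition dbar :: "'a set \<Rightarrow> 'a set set \<Rightarrow> ('a set \<Rightarrow> real) \<Rightarrow> ('a \<Rightarrow> real) \<Rightarrow> 'a list \<Rightarrow> 'a \<Rightarrow> real" where
  "dbar V E len w P p = (\<Sum>j < length P. branch_weight V E len w P (P ! j) * tdist E len (P ! j) p)"

definition T2bar :: "'a set \<Rightarrow> 'a set set \<Rightarrow> ('a set \<Rightarrow> real) \<Rightarrow> ('a \<Rightarrow> real) \<Rightarrow> real \<Rightarrow> 'a list \<Rightarrow> real" where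
  "T2bar V E len w vt P = (1 / vt) * (\<Sum>v \<in> V. w v * dbar V E len w P (proj E len P v))"

definition Sbar :: "'a set \<Rightarrow> 'a set set \<Rightarrow> ('a set \<Rightarrow> real) \<Rightarrow> ('a \<Rightarrow> real) \<Rightarrow> real \<Rightarrow> real \<Rightarrow> 'a list \<Rightarrow> real" where
  "Sbar V E len w vt G P = T2bar V E len w vt P + G"

end

theory Submission
  imports Defs
begin

text \<open>Give the vertices of R the coordinates pos i = d(r_1, r_i). A vertex v first meets R at
  some foot vertex, so d(v, r_i) = c_v + |pos i - pos (foot v)|, and its projection onto the
  window r_a, ..., r_b is the vertex whose index is the foot clamped to [a, b]. The edge
  r_e r_{e+1} of the window separates the projections of v and u exactly when their feet lie on
  different sides of e, so T2 of the window is (1/v_t) \<Sum>_{a \<le> e < b} len(r_e r_{e+1}) 2 A_e (1 - A_e),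
  where A_e is the weight of the vertices with foot \<le> e. Equal window lengths force the edge
  lengths of R to be periodic with period k - 1, so shifting the window by one changes the cost
  by a nonnegative multiple of 1 - A_j - A_{j+k-1}, which decreases in j. The costs therefore
  first do not increase and then do not decrease, and the minimum sits at an end.\<close>

lemma path_len_singleton [simp]: "path_len len [a] = 0"
  by (simp add: path_len_def)

lemma path_len_Cons_Cons: "path_len len (a # b # xs) = len {a, b} + path_len len (b # xs)"
  unfolding path_len_def by (simp only: length_Cons diff_Suc_1 sum.lessThan_Suc_shift) simp

lemma path_len_append:
  "xs \<noteq> [] \<Longrightarrow> ys \<noteq> [] \<Longrightarrow>
   path_len len (xs @ ys) = path_len len xs + len {last xs, hd ys} + path_len len ys"
proof (induction xs rule: induct_list012)
  case (2 x)
  then show ?case by (cases ys) (auto simp: path_len_Cons_Cons)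
next
  case (3 x y zs)
  then show ?case by (simp add: path_len_Cons_Cons)
qed simp

lemma path_len_append_Cons:
  "path_len len (xs @ a # ys) = path_len len (xs @ [a]) + path_len len (a # ys)"
  by (cases "xs = []") (simp_all add: path_len_append)

lemma path_len_rev: "path_len len (rev xs) = path_len len xs"
proof (induction xs rule: induct_list012)
  case (3 x y zs)
  have "path_len len (rev (x # y # zs)) = path_len len (rev (y # zs) @ [x])"
    by simp
  also have "\<dots> = path_len len (rev (y # zs)) + len {y, x}"
    by (subst path_len_append) auto
  also have "\<dots> = path_len len (x # y # zs)"
    using 3 by (simp add: path_len_Cons_Cons insert_commute)
  finally show ?case .
qed (simp_all add: path_len_def)

lemma is_walk_singleton [simp]: "is_walk E [a]"
  by (simp add: is_walk_def)

lemma is_walk_Cons_Cons: "is_walk E (a # b # xs) \<longleftrightarrow> {a, b} \<in> E \<and> is_walk E (b # xs)"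
  unfolding is_walk_def by (auto simp: less_Suc_eq_0_disj)

lemma is_walk_append_Cons:
  "is_walk E (xs @ [a]) \<Longrightarrow> is_walk E (a # ys) \<Longrightarrow> is_walk E (xs @ a # ys)"
  by (induction xs rule: induct_list012) (simp_all add: is_walk_Cons_Cons)

lemma is_walk_rev: "is_walk E xs \<Longrightarrow> is_walk E (rev xs)"
proof (induction xs rule: induct_list012)
  case (3 x y zs)
  have "is_walk E (rev zs @ y # [x])"
    by (rule is_walk_append_Cons) (use 3 in \<open>auto simp: is_walk_Cons_Cons insert_commute\<close>)
  then show ?case by simp
qed (simp_all add: is_walk_def)

lemma is_walk_drop: "is_walk E xs \<Longrightarrow> n < length xs \<Longrightarrow> is_walk E (drop n xs)"
  unfolding is_walk_def by auto

lemma is_walk_take: "is_walk E xs \<Longrightarrow> 0 < n \<Longrightarrow> is_walk E (take n xs)"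
  unfolding is_walk_def by auto

lemma tdist_eq_path_len:
  assumes "is_tree V E" "x \<in> V" "y \<in> V" "is_path E xs" "hd xs = x" "last xs = y"
  shows "tdist E len x y = path_len len xs"
proof -
  have "\<forall>x\<in>V. \<forall>y\<in>V. \<exists>!xs. is_path E xs \<and> hd xs = x \<and> last xs = y"
    using assms(1) unfolding is_tree_def by (elim conjE)
  then have "(THE xs. is_path E xs \<and> hd xs = x \<and> last xs = y) = xs"
    using assms(2-6) by (intro the1_equality) simp_all
  then show ?thesis unfolding tdist_def by simp
qed

lemma the_strict_argmin:
  fixes f :: "'a \<Rightarrow> 'b::preorder"
  assumes "x \<in> S" "\<forall>q\<in>S. q \<noteq> x \<longrightarrow> f x < f q"
  shows "(THE p. p \<in> S \<and> (\<forall>q\<in>S. q \<noteq> p \<longrightarrow> f p < f q)) = x"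
proof (rule the_equality)
  show "x \<in> S \<and> (\<forall>q\<in>S. q \<noteq> x \<longrightarrow> f x < f q)"
    using assms by blast
  show "p = x" if "p \<in> S \<and> (\<forall>q\<in>S. q \<noteq> p \<longrightarrow> f p < f q)" for p
  proof (rule ccontr)
    assume "p \<noteq> x"
    then have "f p < f x" "f x < f p" using that assms by auto
    then show False by (rule less_asym)
  qed
qed

definition clamp :: "nat \<Rightarrow> nat \<Rightarrow> nat \<Rightarrow> nat" where
  "clamp a b p = max a (min b p)"

lemma sum_weight_products_split:
  fixes w :: "'a \<Rightarrow> real"
  assumes fin: "finite V" and total: "(\<Sum>v\<in>V. w v) = 1"
  shows "(\<Sum>v\<in>V. \<Sum>u\<in>V. w v * w u * (if Q v \<noteq> Q u then 1 else 0))
        = 2 * (\<Sum>u\<in>{u\<in>V. Q u}. w u) * (1 - (\<Sum>u\<in>{u\<in>V. Q u}. w u))"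
proof -
  define A where "A = (\<Sum>u\<in>{u\<in>V. Q u}. w u)"
  have A: "(\<Sum>u\<in>V. if Q u then w u else 0) = A"
    unfolding A_def by (simp add: sum.inter_filter[OF fin])
  have not_A: "(\<Sum>u\<in>V. if \<not> Q u then w u else 0) = 1 - A"
  proof -
    have "(\<Sum>u\<in>V. w u) = (\<Sum>u\<in>V. (if Q u then w u else 0) + (if \<not> Q u then w u else 0))"
      by (rule sum.cong) auto
    then show ?thesis using A total by (simp add: sum.distrib)
  qed
  have inner: "(\<Sum>u\<in>V. w v * w u * (if Q v \<noteq> Q u then 1 else 0)) = w v * (if Q v then 1 - A else A)"
    for v
  proof -
    have "(\<Sum>u\<in>V. w v * w u * (if Q v \<noteq> Q u then 1 else 0))
        = w v * (\<Sum>u\<in>V. if Q v \<noteq> Q u then w u else 0)"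
      unfolding sum_distrib_left by (rule sum.cong) simp_all
    also have "\<dots> = w v * (if Q v then 1 - A else A)"
      using A not_A by (cases "Q v") simp_all
    finally show ?thesis .
  qed
  have "(\<Sum>v\<in>V. w v * (if Q v then 1 - A else A))
      = (\<Sum>v\<in>V. if Q v then w v else 0) * (1 - A) + (\<Sum>v\<in>V. if \<not> Q v then w v else 0) * A"
    unfolding sum_distrib_right sum.distrib[symmetric] by (rule sum.cong) simp_all
  then show ?thesis
    using inner A not_A unfolding A_def by simp
qed

lemma Min_image_eq_min_endpoints:
  fixes F s \<alpha> :: "nat \<Rightarrow> real"
  assumes "0 < N"
    and step: "\<And>j. Suc j < N \<Longrightarrow> F (Suc j) - F j = \<alpha> j * s j"
    and \<alpha>_nonneg: "\<And>j. Suc j < N \<Longrightarrow> \<alpha> j \<ge> 0"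
    and s_antimono: "\<And>i j. i \<le> j \<Longrightarrow> s j \<le> s i"
  shows "Min (F ` {..<N}) = min (F 0) (F (N - 1))"
proof -
  have "min (F 0) (F (N - 1)) \<le> F j" if j: "j < N" for j
  proof (cases "s j > 0")
    case True
    have "F 0 \<le> F i" if "i \<le> j" for i
      using that
    proof (induction i)
      case (Suc i)
      have "s i > 0" using s_antimono[of i j] Suc True by simp
      then have "\<alpha> i * s i \<ge> 0"
        using Suc \<alpha>_nonneg[of i] j by simp
      then show ?case using Suc step[of i] j by simp
    qed simp
    then show ?thesis by (simp add: min_le_iff_disj)
  next
    case False
    have "F (j + m) \<le> F j" if "j + m < N" for m
      using that
    proof (induction m)
      case (Suc m)
      have "s (j + m) \<le> 0" using s_antimono[of j "j + m"] False by simp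
      then have "\<alpha> (j + m) * s (j + m) \<le> 0"
        using Suc \<alpha>_nonneg[of "j + m"] by (simp add: mult_nonneg_nonpos)
      then show ?case using Suc step[of "j + m"] by simp
    qed simp
    from this[of "N - 1 - j"] j show ?thesis by (simp add: min_le_iff_disj)
  qed
  moreover have "0 \<in> {..<N}" "N - 1 \<in> {..<N}" using \<open>0 < N\<close> by auto
  ultimately show ?thesis
    by (intro antisym Min.boundedI) (auto intro!: Min_le simp: min_le_iff_disj)
qed

locale path_in_tree =
  fixes V :: "'a set" and E :: "'a set set" and len :: "'a set \<Rightarrow> real" and R :: "'a list"
  assumes tree: "is_tree V E" and len_pos: "\<forall>e\<in>E. len e > 0"
    and R_path: "is_path E R" and R_in: "set R \<subseteq> V"
begin

definition edge_len :: "nat \<Rightarrow> real" where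
  "edge_len e = len {R ! e, R ! Suc e}"

definition pos :: "nat \<Rightarrow> real" where
  "pos i = (\<Sum>e<i. edge_len e)"

definition subpath :: "nat \<Rightarrow> nat \<Rightarrow> 'a list" where
  "subpath a b = take (Suc b - a) (drop a R)"

definition between :: "nat \<Rightarrow> nat \<Rightarrow> 'a list" where
  "between p i = (if p \<le> i then subpath p i else rev (subpath i p))"

lemma pos_Suc: "pos (Suc i) = pos i + edge_len i"
  by (simp add: pos_def)

lemma pos_diff: "m \<le> n \<Longrightarrow> pos n - pos m = (\<Sum>e\<in>{m..<n}. edge_len e)"
  unfolding pos_def lessThan_atLeast0 by (simp add: sum_diff_nat_ivl)

lemma edge_len_pos: "Suc e < length R \<Longrightarrow> edge_len e > 0"
  using R_path len_pos unfolding is_path_def is_walk_def edge_len_def by auto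

lemma pos_less: "i < j \<Longrightarrow> j < length R \<Longrightarrow> pos i < pos j"
proof (induction j)
  case (Suc j)
  then show ?case
    using edge_len_pos[of j] by (cases "i = j") (auto simp: pos_Suc)
qed simp

lemma pos_le: "i \<le> j \<Longrightarrow> j < length R \<Longrightarrow> pos i \<le> pos j"
  using pos_less by (cases "i = j") (auto intro: less_imp_le)

lemma nth_R_eq_iff: "i < length R \<Longrightarrow> i' < length R \<Longrightarrow> R ! i = R ! i' \<longleftrightarrow> i = i'"
  using R_path unfolding is_path_def by (simp add: nth_eq_iff_index_eq)

lemma subpath_ends:
  assumes "a \<le> b" "b < length R"
  shows "subpath a b \<noteq> [] \<and> hd (subpath a b) = R ! a \<and> last (subpath a b) = R ! b
    \<and> path_len len (subpath a b) = pos b - pos a"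
  using assms
proof (induction b rule: dec_induct)
  case base
  then have "subpath a a = [R ! a]"
    unfolding subpath_def by (simp add: take_Suc_conv_app_nth)
  then show ?case by simp
next
  case (step b)
  then have "subpath a (Suc b) = subpath a b @ [R ! Suc b]"
    unfolding subpath_def by (simp add: Suc_diff_le take_Suc_conv_app_nth)
  with step show ?case
    by (simp add: path_len_append pos_Suc edge_len_def)
qed

lemma is_path_subpath: "a \<le> b \<Longrightarrow> b < length R \<Longrightarrow> is_path E (subpath a b)"
  using R_path unfolding subpath_def is_path_def by (auto intro!: is_walk_take is_walk_drop)

lemma length_subpath: "b < length R \<Longrightarrow> length (subpath a b) = Suc b - a"
  unfolding subpath_def by simp

lemma nth_subpath: "b < length R \<Longrightarrow> t < Suc b - a \<Longrightarrow> subpath a b ! t = R ! (a + t)"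
  unfolding subpath_def by simp

lemma mem_subpath_iff:
  assumes "b < length R"
  shows "x \<in> set (subpath a b) \<longleftrightarrow> (\<exists>i. a \<le> i \<and> i \<le> b \<and> x = R ! i)"
proof
  assume "x \<in> set (subpath a b)"
  then obtain t where "t < Suc b - a" "x = subpath a b ! t"
    by (auto simp: in_set_conv_nth length_subpath[OF assms])
  then show "\<exists>i. a \<le> i \<and> i \<le> b \<and> x = R ! i"
    using nth_subpath[OF assms] by (intro exI[of _ "a + t"]) auto
next
  assume "\<exists>i. a \<le> i \<and> i \<le> b \<and> x = R ! i"
  then obtain i where "a \<le> i" "i \<le> b" "x = R ! i" by blast
  then have "i - a < length (subpath a b)" "subpath a b ! (i - a) = x"
    using nth_subpath[OF assms, of "i - a"] length_subpath[OF assms] by auto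
  then show "x \<in> set (subpath a b)" by (metis nth_mem)
qed

lemma window_eq_subpath: "0 < k \<Longrightarrow> take k (drop j R) = subpath j (j + k - 1)"
  unfolding subpath_def by (simp add: Suc_diff_le)

lemma between_props:
  assumes "p < length R" "i < length R"
  shows "is_path E (between p i) \<and> set (between p i) \<subseteq> set R \<and> hd (between p i) = R ! p
    \<and> last (between p i) = R ! i \<and> path_len len (between p i) = \<bar>pos i - pos p\<bar>"
proof (cases "p \<le> i")
  case True
  then show ?thesis
    using assms subpath_ends[of p i] is_path_subpath[of p i] pos_le[of p i]
    by (auto simp: between_def subpath_def dest: in_set_takeD in_set_dropD)
next
  case False
  then show ?thesis
    using assms subpath_ends[of i p] is_path_subpath[of i p] pos_le[of i p]
    by (auto simp: between_def subpath_def is_path_def path_len_rev hd_rev last_rev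
        intro: is_walk_rev dest: in_set_takeD in_set_dropD)
qed

lemma tdist_nth:
  assumes "q < length R" "i < length R"
  shows "tdist E len (R ! q) (R ! i) = \<bar>pos i - pos q\<bar>"
proof -
  have "R ! q \<in> V" "R ! i \<in> V" using assms R_in by auto
  then show ?thesis
    using between_props[OF assms] tdist_eq_path_len[OF tree, of "R ! q" "R ! i" "between q i"] by simp
qed

lemma approach_R:
  assumes "v \<in> V"
  obtains Q p where "p < length R" "is_walk E (Q @ [R ! p])" "hd (Q @ [R ! p]) = v"
    "distinct Q" "set Q \<inter> set R = {}"
proof -
  have R_ne: "R \<noteq> []" using R_path unfolding is_path_def is_walk_def by auto
  then have "R ! 0 \<in> V" using R_in by auto
  then obtain P where P: "is_path E P" "hd P = v" "last P = R ! 0"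
    using tree assms unfolding is_tree_def by blast
  define Q where "Q = takeWhile (\<lambda>x. x \<notin> set R) P"
  have Q_off_R: "set Q \<inter> set R = {}" unfolding Q_def by (auto dest: set_takeWhileD)
  have "dropWhile (\<lambda>x. x \<notin> set R) P \<noteq> []"
  proof
    assume "dropWhile (\<lambda>x. x \<notin> set R) P = []"
    then have "\<forall>x\<in>set P. x \<notin> set R" by (simp add: dropWhile_eq_Nil_conv)
    moreover have "last P \<in> set P" using P(1) unfolding is_path_def is_walk_def by simp
    ultimately show False using P(3) R_ne by auto
  qed
  then obtain q P' where P': "dropWhile (\<lambda>x. x \<notin> set R) P = q # P'" and "q \<in> set R"
    using hd_dropWhile[of "\<lambda>x. x \<notin> set R" P] by (cases "dropWhile (\<lambda>x. x \<notin> set R) P") auto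
  then obtain p where p: "p < length R" "R ! p = q" by (auto simp: in_set_conv_nth)
  have P_eq: "P = Q @ R ! p # P'"
    using takeWhile_dropWhile_id[of "\<lambda>x. x \<notin> set R" P] P' p(2) unfolding Q_def by simp
  have "is_walk E (Q @ [R ! p])"
    using P(1) is_walk_take[of E P "Suc (length Q)"] unfolding is_path_def P_eq by simp
  moreover have "hd (Q @ [R ! p]) = v" using P(2) unfolding P_eq by (cases Q) simp_all
  moreover have "distinct Q" using P(1) unfolding is_path_def P_eq by simp
  ultimately show thesis using p(1) Q_off_R that by blast
qed

lemma tdist_decomposition:
  assumes v: "v \<in> V"
  shows "\<exists>p. p < length R \<and> (\<exists>c. \<forall>i<length R. tdist E len v (R ! i) = c + \<bar>pos i - pos p\<bar>)"
proof -
  obtain Q p where p: "p < length R" and Q: "is_walk E (Q @ [R ! p])" "hd (Q @ [R ! p]) = v"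
    "distinct Q" "set Q \<inter> set R = {}"
    using approach_R[OF v] .
  have "tdist E len v (R ! i) = path_len len (Q @ [R ! p]) + \<bar>pos i - pos p\<bar>"
    if i: "i < length R" for i
  proof -
    have B: "is_path E (between p i)" "set (between p i) \<subseteq> set R" "hd (between p i) = R ! p"
      "last (between p i) = R ! i" "path_len len (between p i) = \<bar>pos i - pos p\<bar>"
      using between_props[OF p i] by auto
    then have "between p i \<noteq> []" unfolding is_path_def is_walk_def by simp
    then obtain B where B_eq: "between p i = R ! p # B"
      using B(3) by (cases "between p i") simp_all
    let ?W = "Q @ R ! p # B"
    have "is_walk E ?W"
      using is_walk_append_Cons[OF Q(1)] B(1) unfolding B_eq is_path_def by simp
    moreover have "distinct ?W"
      using Q(3,4) B(1,2) unfolding B_eq is_path_def distinct_append by blast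
    ultimately have W: "is_path E ?W" unfolding is_path_def ..
    have W_hd: "hd ?W = v" using Q(2) by (cases Q) simp_all
    have W_last: "last ?W = R ! i" using B(4) unfolding B_eq by simp
    have "R ! i \<in> V" using R_in i by auto
    then have "tdist E len v (R ! i) = path_len len ?W"
      using tdist_eq_path_len[OF tree v _ W W_hd W_last] by simp
    also have "\<dots> = path_len len (Q @ [R ! p]) + path_len len (R ! p # B)"
      by (rule path_len_append_Cons)
    finally show ?thesis using B(5) unfolding B_eq by simp
  qed
  with p show ?thesis by blast
qed

definition foot :: "'a \<Rightarrow> nat" where
  "foot v = (SOME p. p < length R \<and>
     (\<exists>c. \<forall>i<length R. tdist E len v (R ! i) = c + \<bar>pos i - pos p\<bar>))"

lemma foot:
  assumes "v \<in> V"
  obtains c where "foot v < length R" "\<forall>i<length R. tdist E len v (R ! i) = c + \<bar>pos i - pos (foot v)\<bar>"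
proof -
  have "foot v < length R \<and> (\<exists>c. \<forall>i<length R. tdist E len v (R ! i) = c + \<bar>pos i - pos (foot v)\<bar>)"
    unfolding foot_def by (rule someI_ex) (rule tdist_decomposition[OF assms])
  then show thesis using that by blast
qed

lemma clamp_closest:
  assumes "a \<le> i" "i \<le> b" "i \<noteq> clamp a b p" "b < length R" "p < length R"
  shows "\<bar>pos (clamp a b p) - pos p\<bar> < \<bar>pos i - pos p\<bar>"
proof -
  consider "p < a" "clamp a b p = a" | "a \<le> p" "p \<le> b" "clamp a b p = p"
    | "b < p" "clamp a b p = b"
    using assms(1,2) unfolding clamp_def by (cases "p < a"; cases "b < p") auto
  then show ?thesis
  proof cases
    case 1
    then show ?thesis using assms pos_less[of p a] pos_less[of a i] by auto
  next
    case 2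
    then show ?thesis using assms pos_less[of p i] pos_less[of i p] by (cases "p < i") auto
  next
    case 3
    then show ?thesis using assms pos_less[of i b] pos_less[of b p] by auto
  qed
qed

lemma proj_subpath:
  assumes v: "v \<in> V" and ab: "a \<le> b" "b < length R"
  shows "proj E len (subpath a b) v = R ! clamp a b (foot v)"
proof -
  obtain c where foot_v: "foot v < length R"
    and dist: "\<forall>i<length R. tdist E len v (R ! i) = c + \<bar>pos i - pos (foot v)\<bar>"
    using foot[OF v] .
  let ?c = "clamp a b (foot v)"
  have clamp_in: "a \<le> ?c" "?c \<le> b"
    using ab unfolding clamp_def by auto
  show ?thesis
    unfolding proj_def
  proof (rule the_strict_argmin)
    show "R ! ?c \<in> set (subpath a b)"
      using mem_subpath_iff[OF ab(2)] clamp_in by blast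
    show "\<forall>q\<in>set (subpath a b). q \<noteq> R ! ?c \<longrightarrow> tdist E len v (R ! ?c) < tdist E len v q"
    proof (intro ballI impI)
      fix q assume "q \<in> set (subpath a b)" "q \<noteq> R ! ?c"
      then obtain i where i: "a \<le> i" "i \<le> b" "i \<noteq> ?c" "q = R ! i"
        using mem_subpath_iff[OF ab(2)] by blast
      then show "tdist E len v (R ! ?c) < tdist E len v q"
        using dist clamp_closest[OF i(1-3) ab(2) foot_v] clamp_in ab by simp
    qed
  qed
qed

lemma dist_clamp:
  assumes "a \<le> b" "b < length R"
  shows "\<bar>pos (clamp a b x) - pos (clamp a b y)\<bar>
    = (\<Sum>e\<in>{a..<b}. edge_len e * (if (x \<le> e) \<noteq> (y \<le> e) then 1 else 0))"
proof -
  have ordered: "\<bar>pos (clamp a b x) - pos (clamp a b y)\<bar>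
      = (\<Sum>e\<in>{a..<b}. edge_len e * (if (x \<le> e) \<noteq> (y \<le> e) then 1 else 0))"
    if xy: "x \<le> y" for x y
  proof -
    have le: "clamp a b x \<le> clamp a b y" and lt: "clamp a b y < length R"
      using xy assms unfolding clamp_def by auto
    have "\<bar>pos (clamp a b x) - pos (clamp a b y)\<bar> = (\<Sum>e\<in>{clamp a b x..<clamp a b y}. edge_len e)"
      using pos_le[OF le lt] pos_diff[OF le] by simp
    also have "{clamp a b x..<clamp a b y} = {e\<in>{a..<b}. (x \<le> e) \<noteq> (y \<le> e)}"
      using xy assms unfolding clamp_def by (auto simp: max_def min_def)
    also have "(\<Sum>e\<in>{e\<in>{a..<b}. (x \<le> e) \<noteq> (y \<le> e)}. edge_len e)
        = (\<Sum>e\<in>{a..<b}. if (x \<le> e) \<noteq> (y \<le> e) then edge_len e else 0)"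
      by (rule sum.inter_filter) simp
    finally show ?thesis by (simp add: if_distrib cong: if_cong)
  qed
  show ?thesis
  proof (cases "x \<le> y")
    case False
    then have "\<bar>pos (clamp a b y) - pos (clamp a b x)\<bar>
        = (\<Sum>e\<in>{a..<b}. edge_len e * (if (y \<le> e) \<noteq> (x \<le> e) then 1 else 0))"
      by (intro ordered) simp
    then show ?thesis by (simp add: abs_minus_commute eq_commute)
  qed (rule ordered)
qed

end

locale weighted_path_in_tree = path_in_tree +
  fixes w :: "'a \<Rightarrow> real"
  assumes w_nonneg: "\<forall>v\<in>V. w v \<ge> 0" and w_sum: "(\<Sum>v\<in>V. w v) = 1"
begin

definition mass :: "nat \<Rightarrow> real" where
  "mass e = (\<Sum>u\<in>{u\<in>V. foot u \<le> e}. w u)"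

definition subpath_cost :: "nat \<Rightarrow> nat \<Rightarrow> real" where
  "subpath_cost a b = (\<Sum>e\<in>{a..<b}. edge_len e * (2 * mass e * (1 - mass e)))"

lemma finite_V: "finite V"
  using tree unfolding is_tree_def by auto

lemma mass_mono: "e \<le> e' \<Longrightarrow> mass e \<le> mass e'"
  unfolding mass_def using w_nonneg finite_V by (intro sum_mono2) auto

lemma branch_weight_subpath:
  assumes ab: "a \<le> b" "b < length R" and t: "t \<le> b - a"
  shows "branch_weight V E len w (subpath a b) (R ! (a + t))
    = (\<Sum>u\<in>{u\<in>V. clamp a b (foot u) - a = t}. w u)"
proof -
  have "proj E len (subpath a b) u = R ! (a + t) \<longleftrightarrow> clamp a b (foot u) - a = t" if "u \<in> V" for u
    using proj_subpath[OF that ab] nth_R_eq_iff[of "clamp a b (foot u)" "a + t"] ab t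
    unfolding clamp_def by auto
  then have "{u\<in>V. proj E len (subpath a b) u = R ! (a + t)} = {u\<in>V. clamp a b (foot u) - a = t}"
    by blast
  then show ?thesis unfolding branch_weight_def by simp
qed

lemma dbar_subpath:
  assumes ab: "a \<le> b" "b < length R"
  shows "dbar V E len w (subpath a b) (R ! clamp a b x)
    = (\<Sum>u\<in>V. w u * \<bar>pos (clamp a b x) - pos (clamp a b (foot u))\<bar>)"
proof -
  let ?C = "\<lambda>u. clamp a b (foot u)" and ?c = "clamp a b x"
  have C: "a \<le> ?C u" "?C u \<le> b" "a \<le> ?c" "?c \<le> b" for u
    using ab unfolding clamp_def by auto
  have "dbar V E len w (subpath a b) (R ! ?c)
      = (\<Sum>t<Suc b - a. (\<Sum>u\<in>{u\<in>V. ?C u - a = t}. w u) * \<bar>pos ?c - pos (a + t)\<bar>)"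
    unfolding dbar_def length_subpath[OF ab(2)]
    using ab C nth_subpath[OF ab(2)] branch_weight_subpath[OF ab] tdist_nth
    by (intro sum.cong) (auto simp: abs_minus_commute)
  also have "\<dots> = (\<Sum>t<Suc b - a. \<Sum>u\<in>{u\<in>V. ?C u - a = t}. w u * \<bar>pos ?c - pos (?C u)\<bar>)"
    unfolding sum_distrib_right using C by (intro sum.cong refl) (auto simp: le_add_diff_inverse)
  also have "\<dots> = (\<Sum>u\<in>V. w u * \<bar>pos ?c - pos (?C u)\<bar>)"
  proof (rule sum.group[OF finite_V])
    show "(\<lambda>u. ?C u - a) ` V \<subseteq> {..<Suc b - a}"
    proof (intro image_subsetI)
      show "?C u - a \<in> {..<Suc b - a}" for u
        using C(2)[of u] ab(1) unfolding lessThan_iff by arith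
    qed
  qed simp
  finally show ?thesis .
qed

lemma sum_dbar_subpath:
  assumes ab: "a \<le> b" "b < length R"
  shows "(\<Sum>v\<in>V. w v * dbar V E len w (subpath a b) (proj E len (subpath a b) v))
    = subpath_cost a b"
proof -
  let ?cut = "\<lambda>e v u. if (foot v \<le> e) \<noteq> (foot u \<le> e) then 1 else 0 :: real"
  have "(\<Sum>v\<in>V. w v * dbar V E len w (subpath a b) (proj E len (subpath a b) v))
      = (\<Sum>v\<in>V. \<Sum>u\<in>V. \<Sum>e\<in>{a..<b}. edge_len e * (w v * w u * ?cut e v u))"
    using proj_subpath[OF _ ab] dbar_subpath[OF ab] dist_clamp[OF ab]
    by (intro sum.cong refl) (simp add: sum_distrib_left mult_ac)
  also have "\<dots> = (\<Sum>v\<in>V. \<Sum>e\<in>{a..<b}. \<Sum>u\<in>V. edge_len e * (w v * w u * ?cut e v u))"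
    by (rule sum.cong[OF refl], rule sum.swap)
  also have "\<dots> = (\<Sum>e\<in>{a..<b}. \<Sum>v\<in>V. \<Sum>u\<in>V. edge_len e * (w v * w u * ?cut e v u))"
    by (rule sum.swap)
  also have "\<dots> = (\<Sum>e\<in>{a..<b}. edge_len e * (\<Sum>v\<in>V. \<Sum>u\<in>V. w v * w u * ?cut e v u))"
    by (simp add: sum_distrib_left)
  also have "\<dots> = subpath_cost a b"
    unfolding subpath_cost_def mass_def using sum_weight_products_split[OF finite_V w_sum] by simp
  finally show ?thesis .
qed

lemma T2bar_subpath:
  "a \<le> b \<Longrightarrow> b < length R \<Longrightarrow> T2bar V E len w vt (subpath a b) = subpath_cost a b / vt"
  unfolding T2bar_def by (simp add: sum_dbar_subpath)

lemma subpath_cost_shift: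
  assumes "a \<le> b" "edge_len b = edge_len a"
  shows "subpath_cost (Suc a) (Suc b) - subpath_cost a b
    = 2 * edge_len a * (mass b - mass a) * (1 - mass a - mass b)"
proof -
  define g where "g e = edge_len e * (2 * mass e * (1 - mass e))" for e
  have "sum g {a..<Suc b} = g a + sum g {Suc a..<Suc b}"
    using assms(1) by (intro sum.atLeast_Suc_lessThan) simp
  moreover have "sum g {a..<Suc b} = sum g {a..<b} + g b"
    using assms(1) by (intro sum.atLeastLessThan_Suc)
  ultimately have "subpath_cost (Suc a) (Suc b) - subpath_cost a b = g b - g a"
    unfolding subpath_cost_def g_def[symmetric] by simp
  then show ?thesis
    using assms(2) unfolding g_def by (simp add: algebra_simps)
qed

lemma plen_subpath:
  assumes "a \<le> b" "b < length R"
  shows "plen E len (subpath a b) = pos b - pos a"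
  using subpath_ends[OF assms] tdist_nth[of a b] pos_le[OF assms] assms
  unfolding plen_def by simp

lemma Sbar_window:
  assumes "0 < k" "j + k \<le> length R"
  shows "Sbar V E len w vt G (take k (drop j R)) = subpath_cost j (j + k - 1) / vt + G"
  using assms T2bar_subpath[of j "j + k - 1"]
  unfolding Sbar_def window_eq_subpath[OF assms(1)] by simp

lemma Sbar_window_shift:
  assumes k: "0 < k" and fits: "Suc j + k \<le> length R"
    and same_len: "plen E len (take k (drop (Suc j) R)) = plen E len (take k (drop j R))"
  shows "Sbar V E len w vt G (take k (drop (Suc j) R)) - Sbar V E len w vt G (take k (drop j R))
    = 2 * edge_len j * (mass (j + k - 1) - mass j) / vt * (1 - mass j - mass (j + k - 1))"
proof -
  have shift: "Suc j + k - 1 = Suc (j + k - 1)" and "j \<le> j + k - 1" using k by simp_all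
  have "pos (Suc (j + k - 1)) - pos (Suc j) = pos (j + k - 1) - pos j"
    using same_len plen_subpath[of "Suc j" "Suc j + k - 1"] plen_subpath[of j "j + k - 1"] k fits
    unfolding window_eq_subpath[OF k] shift by simp
  then have "edge_len (j + k - 1) = edge_len j" by (simp add: pos_Suc)
  then show ?thesis
    using Sbar_window[OF k] subpath_cost_shift[OF \<open>j \<le> j + k - 1\<close>] fits shift
    by (simp add: diff_divide_distrib[symmetric])
qed

end

theorem corollary4:
  fixes V :: "'a set" and E :: "'a set set" and len :: "'a set \<Rightarrow> real"
    and w :: "'a \<Rightarrow> real" and vt G l :: real and R :: "'a list" and k :: nat
  assumes tree: "is_tree V E"
    and len_pos: "\<forall>e\<in>E. len e > 0"
    and w_nonneg: "\<forall>v\<in>V. w v \<ge> 0"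
    and w_sum: "(\<Sum>v\<in>V. w v) = 1"
    and vt_pos: "vt > 0"
    and G_nonneg: "G \<ge> 0"
    and R_path: "is_path E R" and R_in: "set R \<subseteq> V"
    and k_ge: "2 \<le> k" and k_le: "k \<le> length R"
    and same_len: "\<forall>j < length R - k + 1. plen E len (take k (drop j R)) = l"
  shows "Min ((\<lambda>j. Sbar V E len w vt G (take k (drop j R))) ` {..< length R - k + 1})
         = min (Sbar V E len w vt G (take k R))
               (Sbar V E len w vt G (take k (drop (length R - k) R)))"
proof -
  interpret weighted_path_in_tree V E len R w
    using assms by unfold_locales auto
  define N where "N = length R - k + 1"
  let ?S = "\<lambda>j. Sbar V E len w vt G (take k (drop j R))"
  have "Min (?S ` {..<N}) = min (?S 0) (?S (N - 1))"
  proof (rule Min_image_eq_min_endpoints)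
    show "?S (Suc j) - ?S j = 2 * edge_len j * (mass (j + k - 1) - mass j) / vt
        * (1 - mass j - mass (j + k - 1))" if "Suc j < N" for j
      using Sbar_window_shift[of k j] same_len that k_ge unfolding N_def by simp
    show "0 \<le> 2 * edge_len j * (mass (j + k - 1) - mass j) / vt" if "Suc j < N" for j
    proof -
      have "Suc j < length R" "j \<le> j + k - 1" using that k_ge unfolding N_def by auto
      then show ?thesis using edge_len_pos[of j] mass_mono[of j "j + k - 1"] vt_pos by simp
    qed
    show "1 - mass j - mass (j + k - 1) \<le> 1 - mass i - mass (i + k - 1)" if "i \<le> j" for i j
      using mass_mono[OF that] mass_mono[of "i + k - 1" "j + k - 1"] that by (simp add: diff_le_mono)
  qed (simp add: N_def)
  then show ?thesis unfolding N_def by simp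
qed

end
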